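(* Let $k\ge1$ and let $x=(X_1,\dots,X_k)$, $y=(Y_1,\dots,Y_k)$ be elements of $\mathrm M_2(\mathbb Z)^k$ such that every entry of every $X_i$ and $Y_i$ lies in $\{0,1\}$. If the reductions of $x,y$ modulo $2$ generate $\mathrm M_2(\mathbb F_2)^k$ as an $\mathbb F_2$-algebra, then $x,y$ generate $\mathrm M_2(\mathbb Z)^k$ as a ring. In particular, the ring $\mathrm M_2(\mathbb Z)^{16}$ can be generated by $2$ elements.
   Context: Generation is as unital associative algebra (ring): the non-commutative monomials in the generators (including $1$) span the algebra as a module over the base ring. *)

theory Defs
  imports "HOL-Analysis.Analysis" "HOL-Library.Z2"
begin

text \<open>An element of M_2(R)^k is represented as a function nat => R^2^2 of which only the
  entries at indices i < k matter.\<close>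

inductive_set tuple_alg_gen :: "(nat \<Rightarrow> 'a::comm_ring_1^2^2) set \<Rightarrow> (nat \<Rightarrow> 'a^2^2) set"
  for G where
  gen: "g \<in> G \<Longrightarrow> g \<in> tuple_alg_gen G"
| one: "(\<lambda>i. mat 1) \<in> tuple_alg_gen G"
| zero: "(\<lambda>i. 0) \<in> tuple_alg_gen G"
| add: "a \<in> tuple_alg_gen G \<Longrightarrow> b \<in> tuple_alg_gen G \<Longrightarrow> (\<lambda>i. a i + b i) \<in> tuple_alg_gen G"
| mult: "a \<in> tuple_alg_gen G \<Longrightarrow> b \<in> tuple_alg_gen G \<Longrightarrow> (\<lambda>i. a i ** b i) \<in> tuple_alg_gen G"
| smult: "a \<in> tuple_alg_gen G \<Longrightarrow> (\<lambda>i. mat c ** a i) \<in> tuple_alg_gen G"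

definition generates_M2_tuple :: "nat \<Rightarrow> (nat \<Rightarrow> 'a::comm_ring_1^2^2) set \<Rightarrow> bool" where
  "generates_M2_tuple k G \<longleftrightarrow>
     (\<forall>z :: nat \<Rightarrow> 'a^2^2. \<exists>w \<in> tuple_alg_gen G. \<forall>i<k. w i = z i)"

definition red2 :: "(nat \<Rightarrow> int^2^2) \<Rightarrow> (nat \<Rightarrow> bit^2^2)" where
  "red2 x = (\<lambda>i. \<chi> a b. of_int (x i $ a $ b))"

end

theory Submission
  imports Defs
begin

(* At a single position, the algebra generated by X and Y is spanned by 1, X, Y, XY
   (Cayley-Hamilton), and products of such combinations have coefficients depending only on
   the invariants tr X, det X, tr Y, det Y, tr XY.  The lattice spanned by 1, X, Y, XY has an
   index given by a 3x3 determinant (span_index); when it is a unit, 1, X, Y, XY span M_2(Z).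
   For positions i and j, the j-components of the elements vanishing at i form a two-sided
   ideal whose scalar part contains every difference of invariants.  For 0/1 matrices with unit
   index, some nonzero difference divides 4, so together with an odd element the ideal contains
   1, giving an element that is 1 at i and 0 at j; a Chinese remainder argument then yields
   generation.  Generation modulo 2 provides both inputs: a unit index (by a finite check over
   0/1 matrices) and, by lifting the element that is 1 at i and 0 elsewhere, distinct invariants
   together with an odd scalar.  Finally, an explicit pair of 16-tuples with pairwise
   parity-separated invariants shows that M_2(Z)^16 is generated by two elements. *)

lemma mat2_mult_entry:
  "((A::'a::comm_ring_1^2^2) ** B) $ i $ j = A$i$1 * B$1$j + A$i$2 * B$2$j"
  by (simp add: matrix_matrix_mult_def sum_2)

lemma mat2_entry: "(mat c :: 'a::zero^2^2) $ i $ j = (if i = j then c else 0)"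
  by (simp add: mat_def)

lemma mat2_eq_iff:
  "(A::'a^2^2) = B \<longleftrightarrow> A$1$1 = B$1$1 \<and> A$1$2 = B$1$2 \<and> A$2$1 = B$2$1 \<and> A$2$2 = B$2$2"
  by (simp add: vec_eq_iff forall_2)

lemma scalar_mat_mult_entry: "(mat c ** (A::'a::comm_ring_1^2^2)) $ i $ j = c * A$i$j"
  using exhaust_2[of i] by (auto simp: mat2_mult_entry mat2_entry)

definition mat2x2 :: "'a \<Rightarrow> 'a \<Rightarrow> 'a \<Rightarrow> 'a \<Rightarrow> 'a::zero^2^2" where
  "mat2x2 a b c d = vector [vector [a, b], vector [c, d]]"

lemma mat2x2_entries [simp]:
  "mat2x2 a b c d $1$1 = a" "mat2x2 a b c d $1$2 = b" "mat2x2 a b c d $2$1 = c" "mat2x2 a b c d $2$2 = d"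
  by (simp_all add: mat2x2_def)

lemma trace_2: "trace (A::'a::comm_ring_1^2^2) = A$1$1 + A$2$2"
  by (simp add: trace_def sum_2)

lemma tuple_alg_gen_neg: "a \<in> tuple_alg_gen G \<Longrightarrow> (\<lambda>i. - a i) \<in> tuple_alg_gen G"
proof -
  have "mat (-1) ** A = - A" for A :: "'a::comm_ring_1^2^2"
    by (simp add: mat2_eq_iff scalar_mat_mult_entry)
  then show "a \<in> tuple_alg_gen G \<Longrightarrow> (\<lambda>i. - a i) \<in> tuple_alg_gen G"
    using tuple_alg_gen.smult[of a G "-1"] by simp
qed

lemma tuple_alg_gen_diff:
  "a \<in> tuple_alg_gen G \<Longrightarrow> b \<in> tuple_alg_gen G \<Longrightarrow> (\<lambda>i. a i - b i) \<in> tuple_alg_gen G"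
  using tuple_alg_gen.add[OF _ tuple_alg_gen_neg, of a G b] by simp

section \<open>Linear combinations of 1, X, Y and XY\<close>

text \<open>The combination c0 + c1 X + c2 Y + c3 XY.  The subalgebra generated by X and Y in a
  single 2x2 matrix algebra consists of such combinations, and the coefficients of a product
  depend only on the five invariants of the pair (X, Y).\<close>

definition comb :: "'a \<Rightarrow> 'a \<Rightarrow> 'a \<Rightarrow> 'a \<Rightarrow> 'a::comm_ring_1^2^2 \<Rightarrow> 'a^2^2 \<Rightarrow> 'a^2^2" where
  "comb c0 c1 c2 c3 X Y = mat c0 + mat c1 ** X + mat c2 ** Y + mat c3 ** (X ** Y)"

definition invariants :: "'a::comm_ring_1^2^2 \<Rightarrow> 'a^2^2 \<Rightarrow> 'a \<times> 'a \<times> 'a \<times> 'a \<times> 'a" where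
  "invariants X Y = (trace X, det X, trace Y, det Y, trace (X ** Y))"

lemma comb_entry:
  "comb c0 c1 c2 c3 X Y $ i $ j = (if i = j then c0 else 0) + c1 * X$i$j + c2 * Y$i$j + c3 * (X ** Y)$i$j"
  by (simp add: comb_def mat2_entry scalar_mat_mult_entry)

lemma comb_add:
  "comb c0 c1 c2 c3 X Y + comb d0 d1 d2 d3 X Y = comb (c0+d0) (c1+d1) (c2+d2) (c3+d3) X Y"
  by (simp add: mat2_eq_iff comb_entry algebra_simps)

lemma comb_scale: "mat c ** comb d0 d1 d2 d3 X Y = comb (c*d0) (c*d1) (c*d2) (c*d3) X Y"
  by (simp add: mat2_eq_iff scalar_mat_mult_entry comb_entry algebra_simps)

lemma comb_basis:
  "comb 1 0 0 0 X Y = mat 1" "comb 0 1 0 0 X Y = X" "comb 0 0 1 0 X Y = Y" "comb 0 0 0 0 X Y = 0"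
  by (simp_all add: mat2_eq_iff comb_entry mat2_entry)

text \<open>Cayley--Hamilton in the form needed below: the square of X and the reversed product YX
  are again combinations, with coefficients given by the invariants.\<close>

lemma cayley_hamilton_X: "X ** X = comb (- det X) (trace X) 0 0 X Y"
  by (simp add: mat2_eq_iff mat2_mult_entry comb_entry trace_2 det_2 algebra_simps)

lemma cayley_hamilton_YX:
  "Y ** X = comb (trace (X ** Y) - trace X * trace Y) (trace Y) (trace X) (-1) X Y"
  by (simp add: mat2_eq_iff mat2_mult_entry comb_entry trace_2 det_2 algebra_simps)

lemma comb_mult:
  fixes v :: "'a::comm_ring_1 \<times> 'a \<times> 'a \<times> 'a \<times> 'a"
  shows "\<exists>e0 e1 e2 e3. \<forall>X Y. invariants X Y = v \<longrightarrow>
     comb c0 c1 c2 c3 X Y ** comb d0 d1 d2 d3 X Y = comb e0 e1 e2 e3 X Y"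
proof -
  obtain tX dX tY dY tXY where v: "v = (tX, dX, tY, dY, tXY)" by (cases v) auto
  show ?thesis
  proof (intro exI allI impI)
    fix X Y :: "'a^2^2"
    assume "invariants X Y = v"
    then have inv: "trace X = tX" "det X = dX" "trace Y = tY" "det Y = dY" "trace (X ** Y) = tXY"
      by (simp_all add: invariants_def v)
    show "comb c0 c1 c2 c3 X Y ** comb d0 d1 d2 d3 X Y =
      comb (c0*d0 - c1*d1*dX + c2*d1*(tXY - tX*tY) - c2*d2*dY - c2*d3*tX*dY - c3*d1*tY*dX - c3*d3*dX*dY)
           (c0*d1 + c1*d0 + c1*d1*tX + c2*d1*tY + c2*d3*dY + c3*d1*tXY - c3*d2*dY)
           (c0*d2 + c2*d0 - c1*d3*dX + c2*d1*tX + c2*d2*tY + c2*d3*tXY + c3*d1*dX)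
           (c0*d3 + c3*d0 + c1*d2 + c1*d3*tX - c2*d1 + c3*d2*tY + c3*d3*tXY) X Y"
      unfolding inv[symmetric] mat2_eq_iff comb_entry trace_2 det_2
      by (simp add: mat2_mult_entry mat2_entry comb_entry algebra_simps)
  qed
qed

lemma comb_in_tuple_alg_gen:
  assumes "x \<in> G" "y \<in> G"
  shows "(\<lambda>i. comb c0 c1 c2 c3 (x i) (y i)) \<in> tuple_alg_gen G"
proof -
  note gen = tuple_alg_gen.gen[OF assms(1)] tuple_alg_gen.gen[OF assms(2)]
  have "(\<lambda>i. mat c0 ** mat 1 + mat c1 ** x i + mat c2 ** y i + mat c3 ** (x i ** y i)) \<in> tuple_alg_gen G"
    by (intro tuple_alg_gen.add tuple_alg_gen.smult tuple_alg_gen.mult tuple_alg_gen.one gen)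
  then show ?thesis by (simp add: comb_def)
qed

lemma tuple_alg_gen_comb:
  assumes inv: "invariants (x i) (y i) = invariants (x j) (y j)"
    and a: "a \<in> tuple_alg_gen {x, y}"
  shows "\<exists>c0 c1 c2 c3. a i = comb c0 c1 c2 c3 (x i) (y i) \<and> a j = comb c0 c1 c2 c3 (x j) (y j)"
  using a
proof induct
  case (gen g)
  then show ?case by (metis comb_basis(2,3) empty_iff insert_iff)
next
  case one then show ?case by (metis comb_basis(1))
next
  case zero then show ?case by (metis comb_basis(4))
next
  case (add a b) then show ?case by (metis comb_add)
next
  case (mult a b)
  then obtain c0 c1 c2 c3 d0 d1 d2 d3 where
    "a i = comb c0 c1 c2 c3 (x i) (y i)" "a j = comb c0 c1 c2 c3 (x j) (y j)"
    "b i = comb d0 d1 d2 d3 (x i) (y i)" "b j = comb d0 d1 d2 d3 (x j) (y j)" by blast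
  moreover obtain e0 e1 e2 e3 where "\<forall>X Y. invariants X Y = invariants (x j) (y j) \<longrightarrow>
     comb c0 c1 c2 c3 X Y ** comb d0 d1 d2 d3 X Y = comb e0 e1 e2 e3 X Y"
    using comb_mult by blast
  ultimately show ?case using inv by auto
next
  case (smult a c) then show ?case by (metis comb_scale)
qed

section \<open>The index of the span of 1, X, Y and XY\<close>

text \<open>Modulo the scalar matrices, an integer 2x2 matrix is described by three coordinates.
  The determinant of the coordinates of X, Y and XY measures the index of the lattice spanned by
  1, X, Y, XY in M_2(Z): it is a unit exactly when these four matrices form a Z-basis.\<close>

definition traceless_coords :: "int^2^2 \<Rightarrow> int \<times> int \<times> int" where
  "traceless_coords A = (A$1$1 - A$2$2, A$1$2, A$2$1)"

fun det3 :: "int \<times> int \<times> int \<Rightarrow> int \<times> int \<times> int \<Rightarrow> int \<times> int \<times> int \<Rightarrow> int" where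
  "det3 (p1, p2, p3) (q1, q2, q3) (r1, r2, r3) =
     p1 * (q2 * r3 - q3 * r2) - q1 * (p2 * r3 - p3 * r2) + r1 * (p2 * q3 - p3 * q2)"

definition coord_det :: "int^2^2 \<Rightarrow> int^2^2 \<Rightarrow> int^2^2 \<Rightarrow> int" where
  "coord_det A B C = det3 (traceless_coords A) (traceless_coords B) (traceless_coords C)"

definition span_index :: "int^2^2 \<Rightarrow> int^2^2 \<Rightarrow> int" where
  "span_index X Y = coord_det X Y (X ** Y)"

lemma coord_det_expand:
  "coord_det A B C =
     (A$1$1 - A$2$2) * (B$1$2 * C$2$1 - B$2$1 * C$1$2)
   - (B$1$1 - B$2$2) * (A$1$2 * C$2$1 - A$2$1 * C$1$2)
   + (C$1$1 - C$2$2) * (A$1$2 * B$2$1 - A$2$1 * B$1$2)"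
  by (simp add: coord_det_def traceless_coords_def)

text \<open>Cramer's rule: the span of 1, X, Y, XY contains span_index X Y times every matrix.\<close>

lemma comb_cramer:
  "\<exists>c0. comb c0 (coord_det z Y (X ** Y)) (coord_det X z (X ** Y)) (coord_det X Y z) X Y
         = mat (span_index X Y) ** z"
proof
  let ?c1 = "coord_det z Y (X ** Y)" and ?c2 = "coord_det X z (X ** Y)" and ?c3 = "coord_det X Y z"
  show "comb (span_index X Y * z$2$2 - ?c1 * X$2$2 - ?c2 * Y$2$2 - ?c3 * (X ** Y)$2$2) ?c1 ?c2 ?c3 X Y
         = mat (span_index X Y) ** z"
    unfolding mat2_eq_iff comb_entry scalar_mat_mult_entry span_index_def coord_det_expand
    by simp algebra
qed

lemma span_index_unit_spans:
  assumes "span_index X Y \<in> {1, -1}"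
  shows "\<exists>c0 c1 c2 c3. z = comb c0 c1 c2 c3 X Y"
proof -
  let ?d = "span_index X Y"
  obtain c0 c1 c2 c3 where "comb c0 c1 c2 c3 X Y = mat ?d ** (mat ?d ** z)"
    using comb_cramer[of "mat ?d ** z" Y X] by blast
  also have "mat ?d ** (mat ?d ** z) = z"
    using assms by (auto simp: mat2_eq_iff scalar_mat_mult_entry)
  finally show ?thesis by metis
qed

lemma coord_det_comb:
  "coord_det (comb c0 c1 c2 c3 X Y) Y (X ** Y) = c1 * span_index X Y"
  "coord_det X (comb c0 c1 c2 c3 X Y) (X ** Y) = c2 * span_index X Y"
  "coord_det X Y (comb c0 c1 c2 c3 X Y) = c3 * span_index X Y"
  unfolding span_index_def coord_det_expand comb_entry by (simp_all, algebra+)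

lemma coord_det_even:
  assumes "even (A$1$1 - A$2$2)" "even (A$1$2)" "even (A$2$1)"
  shows "even (coord_det A B C)" "even (coord_det B A C)" "even (coord_det B C A)"
  using assms by (auto simp: coord_det_expand)

lemma comb_coeffs_mod2:
  assumes odd_index: "odd (span_index X Y)"
    and e: "even (comb c0 c1 c2 c3 X Y $1$1 - 1)" "even (comb c0 c1 c2 c3 X Y $1$2)"
      "even (comb c0 c1 c2 c3 X Y $2$1)" "even (comb c0 c1 c2 c3 X Y $2$2 - 1)"
  shows "odd c0 \<and> even c1 \<and> even c2 \<and> even c3"
proof -
  let ?L = "comb c0 c1 c2 c3 X Y"
  have "?L$1$1 - ?L$2$2 = (?L$1$1 - 1) - (?L$2$2 - 1)" by simp
  then have L: "even (?L$1$1 - ?L$2$2)" "even (?L$1$2)" "even (?L$2$1)" using e by simp_all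
  have "even (c1 * span_index X Y)" "even (c2 * span_index X Y)" "even (c3 * span_index X Y)"
    using coord_det_even(1)[OF L, of Y "X ** Y"] coord_det_even(2)[OF L, of X "X ** Y"]
      coord_det_even(3)[OF L, of X Y]
    by (simp_all only: coord_det_comb)
  then have "even c1" "even c2" "even c3" using odd_index by simp_all
  moreover have "?L$2$2 = c0 + c1 * X$2$2 + c2 * Y$2$2 + c3 * (X ** Y)$2$2"
    by (simp add: comb_entry)
  ultimately show ?thesis using e(4) by auto
qed

definition index_form :: "int \<times> int \<times> int \<times> int \<times> int \<Rightarrow> int" where
  "index_form v = (case v of (p, q, r, s, t) \<Rightarrow> p * p * s + r * r * q + t * t - p * r * t - 4 * q * s)"

lemma span_index_invariants: "span_index X Y = index_form (invariants X Y)"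
  unfolding span_index_def coord_det_expand index_form_def invariants_def trace_2 det_2
    mat2_mult_entry
  by simp algebra

fun dot3 :: "int \<times> int \<times> int \<Rightarrow> int \<times> int \<times> int \<Rightarrow> int" where
  "dot3 (w1, w2, w3) (u1, u2, u3) = w1 * u1 + w2 * u2 + w3 * u3"

lemma dot3_comb:
  "dot3 w (traceless_coords (comb c0 c1 c2 c3 X Y)) =
     c1 * dot3 w (traceless_coords X) + c2 * dot3 w (traceless_coords Y)
   + c3 * dot3 w (traceless_coords (X ** Y))"
  by (cases w) (simp add: traceless_coords_def comb_entry algebra_simps)

definition zero_one :: "int^2^2 \<Rightarrow> bool" where
  "zero_one X \<longleftrightarrow> (\<forall>a b. X$a$b \<in> {0, 1})"

lemma zero_one_iff:
  "zero_one X \<longleftrightarrow> X$1$1 \<in> {0, 1} \<and> X$1$2 \<in> {0, 1} \<and> X$2$1 \<in> {0, 1} \<and> X$2$2 \<in> {0, 1}"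
  by (simp add: zero_one_def forall_2)

lemma zero_one_entries:
  assumes "zero_one X"
  shows "X$1$1 \<in> {0, 1}" "X$1$2 \<in> {0, 1}" "X$2$1 \<in> {0, 1}" "X$2$2 \<in> {0, 1}"
  using assms by (simp_all add: zero_one_def)

lemma zero_one_trace_det:
  assumes "zero_one X"
  shows "trace X \<in> {0, 1, 2}" "det X \<in> {-1, 0, 1}"
  using assms by (auto simp: zero_one_iff trace_2 det_2)

lemma zero_one_trace_mult:
  assumes "zero_one X" "zero_one Y"
  shows "0 \<le> trace (X ** Y) \<and> trace (X ** Y) \<le> 4"
proof -
  have bounds: "0 \<le> u * v \<and> u * v \<le> 1" if "u \<in> {0, 1}" "v \<in> {0, 1}" for u v :: int
    using that by auto
  show ?thesis
    using assms bounds unfolding zero_one_iff trace_2 mat2_mult_entry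
    by (smt (verit))
qed

text \<open>For 0/1 matrices, two pairs with equal trace and determinant invariants and unit index
  have values of tr XY that do not differ by 3: the index form changes by (t' - t) (t' + t - p r),
  whose absolute value would be at least 3.\<close>

lemma index_form_gap:
  assumes p: "p \<in> {0, 1, 2}" and r: "r \<in> {0, 1, 2}"
    and t: "0 \<le> t" "t \<le> 4" "0 \<le> t'" "t' \<le> 4"
    and units: "index_form (p, q, r, s, t) \<in> {1, -1}" "index_form (p, q, r, s, t') \<in> {1, -1}"
  shows "\<bar>t' - t\<bar> \<noteq> 3"
proof
  assume gap: "\<bar>t' - t\<bar> = 3"
  have diff: "index_form (p, q, r, s, t') - index_form (p, q, r, s, t) = (t' - t) * (t' + t - p * r)"
    by (simp add: index_form_def algebra_simps)
  have "t' + t = 3 \<or> t' + t = 5" using gap t by (simp add: abs_if split: if_splits; presburger)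
  moreover have "p * r \<in> {0, 1, 2, 4}" using p r by auto
  ultimately have "t' + t - p * r \<noteq> 0" by auto
  then have "\<bar>index_form (p, q, r, s, t') - index_form (p, q, r, s, t)\<bar> \<ge> 3"
    unfolding diff abs_mult gap by simp
  then show False using units by auto
qed

text \<open>Finite check over all pairs of 0/1 matrices (entries a, b, c, d and e, f, g, h): either
  the index is a unit, or the traceless coordinates of X, Y, XY are linearly dependent modulo 2,
  witnessed by a nonzero functional with 0/1 coefficients.\<close>

lemma span_index_dichotomy_table:
  "\<forall>a\<in>{0,1::int}. \<forall>b\<in>{0,1::int}. \<forall>c\<in>{0,1::int}. \<forall>d\<in>{0,1::int}.
   \<forall>e\<in>{0,1::int}. \<forall>f\<in>{0,1::int}. \<forall>g\<in>{0,1::int}. \<forall>h\<in>{0,1::int}.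
     (let u = (a - d, b, c); v = (e - h, f, g);
          w = (a * e + b * g - (c * f + d * h), a * f + b * h, c * e + d * g)
      in det3 u v w \<in> {1, -1} \<or>
         (\<exists>z1\<in>{0,1::int}. \<exists>z2\<in>{0,1::int}. \<exists>z3\<in>{0,1::int}. (z1, z2, z3) \<noteq> (0, 0, 0) \<and>
            even (dot3 (z1, z2, z3) u) \<and> even (dot3 (z1, z2, z3) v) \<and> even (dot3 (z1, z2, z3) w)))"
  by code_simp

lemma span_index_even_functional:
  assumes X: "zero_one X" and Y: "zero_one Y" and not_unit: "span_index X Y \<notin> {1, -1}"
  shows "\<exists>w. (\<exists>E. odd (dot3 w (traceless_coords E))) \<and> even (dot3 w (traceless_coords X))
           \<and> even (dot3 w (traceless_coords Y)) \<and> even (dot3 w (traceless_coords (X ** Y)))"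
proof -
  have tc: "traceless_coords X = (X$1$1 - X$2$2, X$1$2, X$2$1)"
    "traceless_coords Y = (Y$1$1 - Y$2$2, Y$1$2, Y$2$1)"
    "traceless_coords (X ** Y) = (X$1$1 * Y$1$1 + X$1$2 * Y$2$1 - (X$2$1 * Y$1$2 + X$2$2 * Y$2$2),
        X$1$1 * Y$1$2 + X$1$2 * Y$2$2, X$2$1 * Y$1$1 + X$2$2 * Y$2$1)"
    by (simp_all add: traceless_coords_def mat2_mult_entry)
  note x = zero_one_entries[OF X] and y = zero_one_entries[OF Y]
  have "det3 (traceless_coords X) (traceless_coords Y) (traceless_coords (X ** Y)) \<in> {1, -1} \<or>
      (\<exists>z1\<in>{0,1::int}. \<exists>z2\<in>{0,1::int}. \<exists>z3\<in>{0,1::int}. (z1, z2, z3) \<noteq> (0, 0, 0) \<and>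
         even (dot3 (z1, z2, z3) (traceless_coords X)) \<and> even (dot3 (z1, z2, z3) (traceless_coords Y)) \<and>
         even (dot3 (z1, z2, z3) (traceless_coords (X ** Y))))"
    using span_index_dichotomy_table[rule_format, OF x(1-4) y(1-4)] unfolding tc by (simp only: Let_def)
  then obtain z1 z2 z3 :: int where z: "z1 \<in> {0, 1}" "z2 \<in> {0, 1}" "z3 \<in> {0, 1}" "(z1, z2, z3) \<noteq> (0, 0, 0)"
    and ev: "even (dot3 (z1, z2, z3) (traceless_coords X))" "even (dot3 (z1, z2, z3) (traceless_coords Y))"
      "even (dot3 (z1, z2, z3) (traceless_coords (X ** Y)))"
    using not_unit unfolding span_index_def coord_det_def by blast
  have "\<exists>E. odd (dot3 (z1, z2, z3) (traceless_coords E))"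
  proof (cases "z1 = 1")
    case True
    then show ?thesis by (intro exI[of _ "mat2x2 1 0 0 0"]) (simp add: traceless_coords_def)
  next
    case z1: False
    show ?thesis
    proof (cases "z2 = 1")
      case True
      then show ?thesis by (intro exI[of _ "mat2x2 0 1 0 0"]) (simp add: traceless_coords_def)
    next
      case False
      with z1 z have "z3 = 1" by auto
      then show ?thesis by (intro exI[of _ "mat2x2 0 0 1 0"]) (simp add: traceless_coords_def)
    qed
  qed
  then show ?thesis using ev by blast
qed

definition int_ideal :: "(int \<Rightarrow> bool) \<Rightarrow> bool" where
  "int_ideal S \<longleftrightarrow> (\<forall>m n. S m \<longrightarrow> S n \<longrightarrow> S (m + n)) \<and> (\<forall>m n. S n \<longrightarrow> S (m * n))"

lemma int_ideal_add: "int_ideal S \<Longrightarrow> S m \<Longrightarrow> S n \<Longrightarrow> S (m + n)"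
  and int_ideal_mult: "int_ideal S \<Longrightarrow> S n \<Longrightarrow> S (m * n)"
  by (simp_all add: int_ideal_def)

lemma int_ideal_diff: "int_ideal S \<Longrightarrow> S m \<Longrightarrow> S n \<Longrightarrow> S (m - n)"
  using int_ideal_add[of S m "(-1) * n"] int_ideal_mult[of S n "-1"] by simp

text \<open>An ideal containing 4 and an odd number s contains 1, since 4 divides s^2 - 1.\<close>

lemma int_ideal_one:
  assumes S: "int_ideal S" and four: "S 4" and s: "S s" "odd s"
  shows "S 1"
proof -
  obtain m where "s = 2 * m + 1" using s(2) by (rule oddE)
  then have "1 = s * s - (m * m + m) * 4" by (simp add: algebra_simps)
  also have "S (s * s - (m * m + m) * 4)"
    by (intro int_ideal_diff[OF S] int_ideal_mult[OF S] s four)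
  finally show ?thesis .
qed

lemma int_ideal_extract:
  assumes S: "int_ideal S" and A: "zero_one A" and non_scalar: "traceless_coords A \<noteq> (0, 0, 0)"
    and entries: "S (\<alpha> * A$1$2)" "S (\<alpha> * A$2$1)" "S (\<alpha> * A$1$1 - \<beta>)" "S (\<alpha> * A$2$2 - \<beta>)"
  shows "S \<alpha> \<and> S \<beta>"
proof -
  have "S \<alpha>"
  proof -
    consider "A$1$2 = 1" | "A$2$1 = 1" | "A$1$1 - A$2$2 = 1 \<or> A$1$1 - A$2$2 = -1"
      using zero_one_entries[OF A] non_scalar by (auto simp: traceless_coords_def)
    then show ?thesis
    proof cases
      case 3
      define d where "d = A$1$1 - A$2$2"
      have "S (d * ((\<alpha> * A$1$1 - \<beta>) - (\<alpha> * A$2$2 - \<beta>)))"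
        by (intro int_ideal_mult[OF S] int_ideal_diff[OF S] entries)
      moreover have "d * ((\<alpha> * A$1$1 - \<beta>) - (\<alpha> * A$2$2 - \<beta>)) = \<alpha> * (d * d)"
        by (simp add: d_def algebra_simps)
      moreover have "d * d = 1" using 3 by (auto simp: d_def)
      ultimately show ?thesis by simp
    qed (use entries in simp_all)
  qed
  moreover have "S (A$1$1 * \<alpha> - (\<alpha> * A$1$1 - \<beta>))"
    by (intro int_ideal_diff[OF S] int_ideal_mult[OF S] entries \<open>S \<alpha>\<close>)
  ultimately show ?thesis by (simp add: algebra_simps)
qed

lemma dvd_four:
  fixes r :: int
  assumes "r \<noteq> 0" "\<bar>r\<bar> \<le> 4" "\<bar>r\<bar> \<noteq> 3"
  shows "r dvd 4"
proof -
  have "r \<in> {-4, -2, -1, 1, 2, 4}" using assms by (simp add: abs_if split: if_splits; presburger)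
  then show ?thesis by auto
qed

lemma trace_mult_difference_dvd_four:
  assumes zo: "zero_one X" "zero_one Y" "zero_one X'" "zero_one Y'"
    and units: "span_index X Y \<in> {1, -1}" "span_index X' Y' \<in> {1, -1}"
    and eq: "trace X' = trace X" "det X' = det X" "trace Y' = trace Y" "det Y' = det Y"
    and differ: "trace (X' ** Y') \<noteq> trace (X ** Y)"
  shows "trace (X' ** Y') - trace (X ** Y) \<noteq> 0 \<and> trace (X' ** Y') - trace (X ** Y) dvd 4"
proof -
  let ?r = "trace (X' ** Y') - trace (X ** Y)"
  have "?r \<noteq> 0" using differ by simp
  moreover have "\<bar>?r\<bar> \<le> 4"
    using zero_one_trace_mult[OF zo(1,2)] zero_one_trace_mult[OF zo(3,4)] by linarith
  moreover have "\<bar>?r\<bar> \<noteq> 3"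
  proof (rule index_form_gap)
    show "trace X \<in> {0, 1, 2}" "trace Y \<in> {0, 1, 2}"
      using zero_one_trace_det[OF zo(1)] zero_one_trace_det[OF zo(2)] by simp_all
    show "0 \<le> trace (X ** Y)" "trace (X ** Y) \<le> 4" "0 \<le> trace (X' ** Y')" "trace (X' ** Y') \<le> 4"
      using zero_one_trace_mult[OF zo(1,2)] zero_one_trace_mult[OF zo(3,4)] by simp_all
    show "index_form (trace X, det X, trace Y, det Y, trace (X ** Y)) \<in> {1, -1}"
      using units(1) by (simp add: span_index_invariants invariants_def)
    show "index_form (trace X, det X, trace Y, det Y, trace (X' ** Y')) \<in> {1, -1}"
      using units(2) eq by (simp add: span_index_invariants invariants_def)
  qed
  ultimately show ?thesis using dvd_four by blast
qed

section \<open>Separating ideals\<close>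

text \<open>The matrices t occurring as j-th component of an element of the generated algebra that vanishes
  at position i form a two-sided ideal of M_2 at a spanning position j; its scalar part is an
  ideal of the integers, and x, y separate i from j as soon as it contains 1.\<close>

definition full_span :: "(nat \<Rightarrow> 'a::comm_ring_1^2^2) \<Rightarrow> (nat \<Rightarrow> 'a^2^2) \<Rightarrow> nat \<Rightarrow> bool" where
  "full_span x y j \<longleftrightarrow> (\<forall>m. \<exists>c0 c1 c2 c3. m = comb c0 c1 c2 c3 (x j) (y j))"

definition sep_ideal :: "(nat \<Rightarrow> 'a::comm_ring_1^2^2) \<Rightarrow> (nat \<Rightarrow> 'a^2^2) \<Rightarrow> nat \<Rightarrow> nat \<Rightarrow> 'a^2^2 \<Rightarrow> bool" where
  "sep_ideal x y i j t \<longleftrightarrow> (\<exists>a\<in>tuple_alg_gen {x, y}. a i = 0 \<and> a j = t)"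

definition sep_scalars :: "(nat \<Rightarrow> int^2^2) \<Rightarrow> (nat \<Rightarrow> int^2^2) \<Rightarrow> nat \<Rightarrow> nat \<Rightarrow> int \<Rightarrow> bool" where
  "sep_scalars x y i j n \<longleftrightarrow> sep_ideal x y i j (mat n)"

lemma sep_ideal_intro: "a \<in> tuple_alg_gen {x, y} \<Longrightarrow> a i = 0 \<Longrightarrow> sep_ideal x y i j (a j)"
  unfolding sep_ideal_def by blast

lemma full_span_element:
  assumes "full_span x y j"
  shows "\<exists>a\<in>tuple_alg_gen {x, y}. a j = m"
proof -
  obtain c0 c1 c2 c3 where "m = comb c0 c1 c2 c3 (x j) (y j)"
    using assms unfolding full_span_def by blast
  then show ?thesis by (intro bexI[OF _ comb_in_tuple_alg_gen]) auto
qed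

lemma sep_ideal_add: "sep_ideal x y i j t \<Longrightarrow> sep_ideal x y i j s \<Longrightarrow> sep_ideal x y i j (t + s)"
  unfolding sep_ideal_def by (auto intro!: bexI[OF _ tuple_alg_gen.add])

lemma sep_ideal_mult:
  assumes "full_span x y j" "sep_ideal x y i j t"
  shows "sep_ideal x y i j (m ** t)" "sep_ideal x y i j (t ** m)"
proof -
  obtain b where b: "b \<in> tuple_alg_gen {x, y}" "b j = m" using full_span_element[OF assms(1)] by blast
  obtain a where a: "a \<in> tuple_alg_gen {x, y}" "a i = 0" "a j = t"
    using assms(2) unfolding sep_ideal_def by blast
  show "sep_ideal x y i j (m ** t)" "sep_ideal x y i j (t ** m)"
    unfolding sep_ideal_def using a b by (auto intro!: bexI[OF _ tuple_alg_gen.mult])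
qed

text \<open>Matrix units move any entry of a matrix onto the diagonal, so the scalar part of a
  two-sided ideal contains every entry of every element.\<close>

definition matrix_unit :: "2 \<Rightarrow> 2 \<Rightarrow> 'a::comm_ring_1^2^2" where
  "matrix_unit r s = (\<chi> a b. if a = r \<and> b = s then 1 else 0)"

lemma scalar_from_matrix_units:
  "mat (t$p$q) = matrix_unit 1 p ** t ** matrix_unit q 1 + matrix_unit 2 p ** t ** matrix_unit q 2"
  using exhaust_2[of p] exhaust_2[of q]
  by (auto simp: mat2_eq_iff mat2_mult_entry mat2_entry matrix_unit_def)

lemma sep_scalars_entry: "full_span x y j \<Longrightarrow> sep_ideal x y i j t \<Longrightarrow> sep_scalars x y i j (t$p$q)"
  unfolding sep_scalars_def scalar_from_matrix_units by (intro sep_ideal_add sep_ideal_mult)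

lemma sep_scalars_ideal:
  assumes "full_span x y j"
  shows "int_ideal (sep_scalars x y i j)"
proof -
  have "mat (m + n) = (mat m + mat n :: int^2^2)" "mat (m * n) = (mat m ** mat n :: int^2^2)" for m n
    by (simp_all add: mat2_eq_iff mat2_entry mat2_mult_entry)
  then show ?thesis
    unfolding int_ideal_def sep_scalars_def using sep_ideal_add sep_ideal_mult(1)[OF assms] by metis
qed

text \<open>Spanning does not depend on the order of x and y, since XY is a combination of 1, Y, X, YX
  (Cayley--Hamilton).\<close>

lemma full_span_swap:
  assumes "full_span x y j"
  shows "full_span y x j"
  unfolding full_span_def
proof
  fix m
  obtain c0 c1 c2 c3 where m: "m = comb c0 c1 c2 c3 (x j) (y j)"
    using assms unfolding full_span_def by blast
  let ?X = "x j" and ?Y = "y j"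
  have "comb (c0 + c3 * (trace (?Y ** ?X) - trace ?Y * trace ?X)) (c2 + c3 * trace ?X)
          (c1 + c3 * trace ?Y) (- c3) ?Y ?X = m"
    unfolding m mat2_eq_iff comb_entry
    by (simp add: mat2_mult_entry trace_2 algebra_simps)
  then show "\<exists>c0 c1 c2 c3. m = comb c0 c1 c2 c3 ?Y ?X" by metis
qed

lemma sep_scalars_swap: "sep_scalars y x i j = sep_scalars x y i j"
  by (simp add: fun_eq_iff sep_scalars_def sep_ideal_def insert_commute)

text \<open>Differences of invariants between positions i and j lie in the scalar part of the separating
  ideal: by Cayley--Hamilton, x^2 - tr(x_i) x + det(x_i) vanishes at i, and its value at j is
  (tr x_j - tr x_i) x_j - (det x_j - det x_i).\<close>

lemma sep_scalars_trace_det: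
  assumes sp: "full_span x y j" and zo: "zero_one (x j)"
    and non_scalar: "traceless_coords (x j) \<noteq> (0, 0, 0)"
  shows "sep_scalars x y i j (trace (x j) - trace (x i)) \<and> sep_scalars x y i j (det (x j) - det (x i))"
proof -
  let ?a = "\<lambda>l. x l ** x l - comb (- det (x i)) (trace (x i)) 0 0 (x l) (y l)"
  have "?a \<in> tuple_alg_gen {x, y}"
    by (intro tuple_alg_gen_diff tuple_alg_gen.mult tuple_alg_gen.gen comb_in_tuple_alg_gen) auto
  moreover have "?a i = 0" using cayley_hamilton_X[of "x i" "y i"] by simp
  ultimately have t: "sep_ideal x y i j (?a j)" by (rule sep_ideal_intro)
  have "?a j = comb (- det (x j)) (trace (x j)) 0 0 (x j) (y j)
               - comb (- det (x i)) (trace (x i)) 0 0 (x j) (y j)"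
    using cayley_hamilton_X[of "x j" "y j"] by simp
  then have "?a j $1$2 = (trace (x j) - trace (x i)) * x j $1$2"
    "?a j $2$1 = (trace (x j) - trace (x i)) * x j $2$1"
    "?a j $1$1 = (trace (x j) - trace (x i)) * x j $1$1 - (det (x j) - det (x i))"
    "?a j $2$2 = (trace (x j) - trace (x i)) * x j $2$2 - (det (x j) - det (x i))"
    by (simp_all add: comb_entry algebra_simps)
  then show ?thesis
    using sep_scalars_entry[OF sp t, of 1 2] sep_scalars_entry[OF sp t, of 2 1]
      sep_scalars_entry[OF sp t, of 1 1] sep_scalars_entry[OF sp t, of 2 2]
    by (intro int_ideal_extract[OF sep_scalars_ideal[OF sp] zo non_scalar]) simp_all
qed

lemma sep_scalars_trace_mult:
  assumes sp: "full_span x y j" and eq: "trace (x j) = trace (x i)" "trace (y j) = trace (y i)"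
  shows "sep_scalars x y i j (trace (x j ** y j) - trace (x i ** y i))"
proof -
  let ?c = "\<lambda>l. comb (trace (x l ** y l) - trace (x l) * trace (y l)) (trace (y l)) (trace (x l)) (-1)"
  let ?a = "\<lambda>l. y l ** x l - ?c i (x l) (y l)"
  have "?a \<in> tuple_alg_gen {x, y}"
    by (intro tuple_alg_gen_diff tuple_alg_gen.mult tuple_alg_gen.gen comb_in_tuple_alg_gen) auto
  moreover have "?a i = 0" using cayley_hamilton_YX[of "y i" "x i"] by simp
  ultimately have t: "sep_ideal x y i j (?a j)" by (rule sep_ideal_intro)
  have "?a j = ?c j (x j) (y j) - ?c i (x j) (y j)"
    using cayley_hamilton_YX[of "y j" "x j"] by simp
  then have "?a j $1$1 = trace (x j ** y j) - trace (x i ** y i)"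
    using eq by (simp add: comb_entry algebra_simps)
  then show ?thesis using sep_scalars_entry[OF sp t, of 1 1] by simp
qed

lemma det3_zero_row: "det3 (0, 0, 0) v w = 0" "det3 u (0, 0, 0) w = 0"
  by (cases v rule: prod_cases3; cases w rule: prod_cases3; simp)
    (cases u rule: prod_cases3; cases w rule: prod_cases3; simp)

lemma span_index_non_scalar:
  assumes "span_index X Y \<noteq> 0"
  shows "traceless_coords X \<noteq> (0, 0, 0)" "traceless_coords Y \<noteq> (0, 0, 0)"
  using assms det3_zero_row unfolding span_index_def coord_det_def by metis+

text \<open>For 0/1 matrices with unit index at two positions with different invariants, the scalar
  part of the separating ideal contains 4: some invariant difference is a nonzero divisor of 4.\<close>

lemma sep_scalars_four:
  assumes sp: "full_span x y j"
    and zo: "zero_one (x i)" "zero_one (y i)" "zero_one (x j)" "zero_one (y j)"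
    and units: "span_index (x i) (y i) \<in> {1, -1}" "span_index (x j) (y j) \<in> {1, -1}"
    and differ: "invariants (x i) (y i) \<noteq> invariants (x j) (y j)"
  shows "sep_scalars x y i j 4"
proof -
  let ?S = "sep_scalars x y i j"
  have ideal: "int_ideal ?S" by (rule sep_scalars_ideal[OF sp])
  have non_scalar: "traceless_coords (x j) \<noteq> (0, 0, 0)" "traceless_coords (y j) \<noteq> (0, 0, 0)"
    using span_index_non_scalar[of "x j" "y j"] units(2) by auto
  define D where "D = {trace (x j) - trace (x i), det (x j) - det (x i),
                       trace (y j) - trace (y i), det (y j) - det (y i)}"
  have D_in: "\<forall>r\<in>D. ?S r"
    using sep_scalars_trace_det[OF sp zo(3) non_scalar(1), of i]
      sep_scalars_trace_det[OF full_span_swap[OF sp] zo(4) non_scalar(2), of i]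
    unfolding D_def sep_scalars_swap[where x = x and y = y] by simp
  have bounds: "0 \<le> trace X \<and> trace X \<le> 2 \<and> \<bar>det X\<bar> \<le> 1" if "zero_one X" for X
    using zero_one_trace_det[OF that] by auto
  have D_small: "\<forall>r\<in>D. \<bar>r\<bar> \<le> 2"
    using bounds[OF zo(1)] bounds[OF zo(2)] bounds[OF zo(3)] bounds[OF zo(4)]
    unfolding D_def by (simp add: abs_le_iff)
  have "\<exists>r. ?S r \<and> r \<noteq> 0 \<and> r dvd 4"
  proof (cases "D \<subseteq> {0}")
    case False
    then obtain r where r: "r \<in> D" "r \<noteq> 0" by blast
    then have "r dvd 4" using D_small by (intro dvd_four) auto
    then show ?thesis using r D_in by blast
  next
    case True
    then have eq: "trace (x j) = trace (x i)" "det (x j) = det (x i)"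
      "trace (y j) = trace (y i)" "det (y j) = det (y i)" unfolding D_def by auto
    then have "trace (x j ** y j) - trace (x i ** y i) \<noteq> 0 \<and> trace (x j ** y j) - trace (x i ** y i) dvd 4"
      using trace_mult_difference_dvd_four[OF zo units] differ by (simp add: invariants_def)
    then show ?thesis using sep_scalars_trace_mult[OF sp eq(1,3)] by blast
  qed
  then obtain r where r: "?S r" "r dvd 4" by blast
  then have "?S ((4 div r) * r)" by (intro int_ideal_mult[OF ideal])
  then show ?thesis using r(2) by simp
qed

lemma separating_element:
  assumes sp: "full_span x y j"
    and zo: "zero_one (x i)" "zero_one (y i)" "zero_one (x j)" "zero_one (y j)"
    and units: "span_index (x i) (y i) \<in> {1, -1}" "span_index (x j) (y j) \<in> {1, -1}"
    and differ: "invariants (x i) (y i) \<noteq> invariants (x j) (y j)"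
    and odd: "sep_scalars x y i j s" "odd s"
  shows "\<exists>e\<in>tuple_alg_gen {x, y}. e i = mat 1 \<and> e j = 0"
proof -
  have "sep_scalars x y i j 1"
    using int_ideal_one[OF sep_scalars_ideal[OF sp] sep_scalars_four[OF sp zo units differ] odd] .
  then obtain a where a: "a \<in> tuple_alg_gen {x, y}" "a i = 0" "a j = mat 1"
    unfolding sep_scalars_def sep_ideal_def by blast
  then show ?thesis
    by (intro bexI[of _ "\<lambda>l. mat 1 - a l"] tuple_alg_gen_diff tuple_alg_gen.one) auto
qed

section \<open>Separation and componentwise surjectivity imply generation\<close>

text \<open>Multiplying separating elements gives, for a finite set F of positions, an element that is
  1 at i and vanishes on F.\<close>

lemma vanishing_on_finite:
  assumes "finite F" and sep: "\<forall>j\<in>F. \<exists>e\<in>tuple_alg_gen G. e i = mat 1 \<and> e j = 0"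
  shows "\<exists>f\<in>tuple_alg_gen G. f i = mat 1 \<and> (\<forall>j\<in>F. f j = 0)"
  using assms
proof (induction F rule: finite_induct)
  case empty
  show ?case by (rule bexI[OF _ tuple_alg_gen.one]) simp
next
  case (insert j F)
  then obtain f where f: "f \<in> tuple_alg_gen G" "f i = mat 1" "\<forall>j\<in>F. f j = 0" by blast
  obtain e where e: "e \<in> tuple_alg_gen G" "e i = mat 1" "e j = 0" using insert.prems by blast
  show ?case
    by (rule bexI[OF _ tuple_alg_gen.mult[OF f(1) e(1)]]) (use f e in auto)
qed

text \<open>A Chinese remainder argument: if every position can be prescribed individually and any
  two positions can be separated, then G generates the whole product of matrix algebras.\<close>

lemma generates_if_separated:
  assumes surj: "\<forall>i<k. \<forall>m. \<exists>a\<in>tuple_alg_gen G. a i = m"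
    and sep: "\<forall>i<k. \<forall>j<k. i \<noteq> j \<longrightarrow> (\<exists>e\<in>tuple_alg_gen G. e i = mat 1 \<and> e j = 0)"
  shows "generates_M2_tuple k G"
  unfolding generates_M2_tuple_def
proof
  fix z :: "nat \<Rightarrow> 'a^2^2"
  have "n \<le> k \<Longrightarrow> \<exists>w\<in>tuple_alg_gen G. \<forall>l<n. w l = z l" for n
  proof (induction n)
    case 0
    show ?case by (rule bexI[OF _ tuple_alg_gen.zero]) simp
  next
    case (Suc n)
    then have n: "n < k" by simp
    obtain w where w: "w \<in> tuple_alg_gen G" "\<forall>l<n. w l = z l" using Suc by auto
    have "finite {j. j < k \<and> j \<noteq> n}" by simp
    moreover have "\<forall>j\<in>{j. j < k \<and> j \<noteq> n}. \<exists>e\<in>tuple_alg_gen G. e n = mat 1 \<and> e j = 0"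
      using sep n by auto
    ultimately obtain f where f: "f \<in> tuple_alg_gen G" "f n = mat 1" "\<forall>j\<in>{j. j < k \<and> j \<noteq> n}. f j = 0"
      by (blast dest: vanishing_on_finite)
    obtain a where a: "a \<in> tuple_alg_gen G" "a n = z n" using surj n by blast
    let ?w = "\<lambda>l. w l + f l ** (a l - w l)"
    have "?w \<in> tuple_alg_gen G"
      by (intro tuple_alg_gen.add tuple_alg_gen.mult tuple_alg_gen_diff w(1) f(1) a(1))
    moreover have "?w l = z l" if "l < Suc n" for l
    proof (cases "l = n")
      case True
      then show ?thesis using f(2) a(2) by simp
    next
      case False
      then have "f l = 0" "w l = z l" using that n f(3) w(2) by auto
      then show ?thesis by simp
    qed
    ultimately show ?case by (intro bexI[where x = ?w]) auto
  qed
  then show "\<exists>w\<in>tuple_alg_gen G. \<forall>i<k. w i = z i" by blast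
qed

section \<open>Reduction modulo 2\<close>

definition red2_mat :: "int^2^2 \<Rightarrow> bit^2^2" where
  "red2_mat u = (\<chi> a b. of_int (u$a$b))"

lemma red2_apply: "red2 x i = red2_mat (x i)"
  by (simp add: red2_def red2_mat_def)

lemma of_int_bit: "(of_int n :: bit) = (if even n then 0 else 1)"
  by (cases "even n") (auto elim!: evenE oddE)

lemma red2_mat_eq_iff: "red2_mat u = red2_mat v \<longleftrightarrow> (\<forall>p q. even (u$p$q - v$p$q))"
  by (auto simp: red2_mat_def vec_eq_iff of_int_bit)

lemma red2_mat_hom:
  "red2_mat (u + v) = red2_mat u + red2_mat v" "red2_mat (u ** v) = red2_mat u ** red2_mat v"
  "red2_mat (mat 1) = mat 1" "red2_mat 0 = 0"
  by (simp_all add: mat2_eq_iff mat2_mult_entry mat2_entry red2_mat_def)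

lemma red2_lift:
  assumes "b \<in> tuple_alg_gen (red2 ` G)"
  shows "\<exists>a\<in>tuple_alg_gen G. \<forall>i. b i = red2_mat (a i)"
  using assms
proof induct
  case (gen g)
  then show ?case by (auto simp: red2_apply intro: tuple_alg_gen.gen)
next
  case one
  show ?case by (rule bexI[OF _ tuple_alg_gen.one]) (simp add: red2_mat_hom)
next
  case zero
  show ?case by (rule bexI[OF _ tuple_alg_gen.zero]) (simp add: red2_mat_hom)
next
  case (add b b')
  then obtain a a' where "a \<in> tuple_alg_gen G" "\<forall>i. b i = red2_mat (a i)"
    "a' \<in> tuple_alg_gen G" "\<forall>i. b' i = red2_mat (a' i)" by blast
  then show ?case
    by (intro bexI[where x = "\<lambda>i. a i + a' i"]) (auto simp: red2_mat_hom intro: tuple_alg_gen.add)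
next
  case (mult b b')
  then obtain a a' where "a \<in> tuple_alg_gen G" "\<forall>i. b i = red2_mat (a i)"
    "a' \<in> tuple_alg_gen G" "\<forall>i. b' i = red2_mat (a' i)" by blast
  then show ?case
    by (intro bexI[where x = "\<lambda>i. a i ** a' i"]) (auto simp: red2_mat_hom intro: tuple_alg_gen.mult)
next
  case (smult b c)
  then obtain a where a: "a \<in> tuple_alg_gen G" "\<forall>i. b i = red2_mat (a i)" by blast
  have "mat c ** M = (if c = 0 then 0 else M)" for M :: "bit^2^2"
    by (cases c) (simp_all add: mat2_eq_iff scalar_mat_mult_entry)
  then show ?case
    using a by (cases "c = 0") (auto simp: red2_mat_hom intro: bexI[OF _ tuple_alg_gen.zero])
qed

lemma lift_mod2_target:
  assumes "generates_M2_tuple k {red2 x, red2 y}"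
  shows "\<exists>a\<in>tuple_alg_gen {x, y}. \<forall>i<k. red2_mat (a i) = z i"
proof -
  obtain b where b: "b \<in> tuple_alg_gen (red2 ` {x, y})" "\<forall>i<k. b i = z i"
    using assms unfolding generates_M2_tuple_def by auto
  then show ?thesis using red2_lift[OF b(1)] by metis
qed

lemma dot3_congruent:
  assumes "red2_mat A = red2_mat B"
  shows "even (dot3 w (traceless_coords A) - dot3 w (traceless_coords B))"
proof -
  obtain w1 w2 w3 where w: "w = (w1, w2, w3)" by (cases w rule: prod_cases3)
  have "dot3 w (traceless_coords A) - dot3 w (traceless_coords B) =
      w1 * ((A$1$1 - B$1$1) - (A$2$2 - B$2$2)) + w2 * (A$1$2 - B$1$2) + w3 * (A$2$1 - B$2$1)"
    by (simp add: w traceless_coords_def algebra_simps)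
  moreover have "even (A$p$q - B$p$q)" for p q using assms by (simp add: red2_mat_eq_iff)
  ultimately show ?thesis by simp
qed

text \<open>If the reductions generate, the index is a unit at every position: otherwise a functional
  vanishing on 1, x_i, y_i, x_i y_i modulo 2 but not on some matrix E would survive on the lift
  of E.\<close>

lemma span_index_unit_mod2:
  assumes gen: "generates_M2_tuple k {red2 x, red2 y}" and i: "i < k"
    and zo: "zero_one (x i)" "zero_one (y i)"
  shows "span_index (x i) (y i) \<in> {1, -1}"
proof (rule ccontr)
  assume "span_index (x i) (y i) \<notin> {1, -1}"
  then obtain w E where E: "odd (dot3 w (traceless_coords E))"
    and ev: "even (dot3 w (traceless_coords (x i)))" "even (dot3 w (traceless_coords (y i)))"
      "even (dot3 w (traceless_coords (x i ** y i)))"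
    using span_index_even_functional[OF zo] by blast
  obtain a where a: "a \<in> tuple_alg_gen {x, y}" "\<forall>l<k. red2_mat (a l) = red2_mat E"
    using lift_mod2_target[OF gen, of "\<lambda>l. red2_mat E"] by blast
  obtain c0 c1 c2 c3 where "a i = comb c0 c1 c2 c3 (x i) (y i)"
    using tuple_alg_gen_comb[OF refl a(1), of i] by blast
  then have "even (dot3 w (traceless_coords (a i)))" using ev by (simp add: dot3_comb)
  moreover have "even (dot3 w (traceless_coords (a i)) - dot3 w (traceless_coords E))"
    using dot3_congruent a(2) i by blast
  ultimately show False using E by simp
qed

text \<open>At positions with equal invariants and odd index, an element that is the identity
  modulo 2 at i is the same combination at j, hence cannot vanish modulo 2 at j.\<close>

lemma equal_invariants_not_separated_mod2:
  assumes odd_index: "odd (span_index (x i) (y i))"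
    and eq: "invariants (x i) (y i) = invariants (x j) (y j)"
    and a: "a \<in> tuple_alg_gen {x, y}" "red2_mat (a i) = red2_mat (mat 1)"
  shows "red2_mat (a j) \<noteq> red2_mat 0"
proof
  assume aj: "red2_mat (a j) = red2_mat 0"
  obtain c0 c1 c2 c3 where c: "a i = comb c0 c1 c2 c3 (x i) (y i)" "a j = comb c0 c1 c2 c3 (x j) (y j)"
    using tuple_alg_gen_comb[OF eq a(1)] by blast
  have ev: "even (a i $p$q - mat 1 $p$q)" for p q using a(2) by (simp add: red2_mat_eq_iff)
  have "even (a i $1$1 - 1)" "even (a i $1$2)" "even (a i $2$1)" "even (a i $2$2 - 1)"
    using ev[of 1 1] ev[of 1 2] ev[of 2 1] ev[of 2 2] by (simp_all add: mat2_entry)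
  then have "odd c0 \<and> even c1 \<and> even c2 \<and> even c3"
    unfolding c(1) by (rule comb_coeffs_mod2[OF odd_index])
  moreover have "a j $1$1 = c0 + c1 * x j $1$1 + c2 * y j $1$1 + c3 * (x j ** y j)$1$1"
    using c(2) by (simp add: comb_entry)
  moreover have "even (a j $1$1)" using aj by (simp add: red2_mat_eq_iff)
  ultimately show False by simp
qed

text \<open>An element that is 1 modulo 2 at i and 0 modulo 2 at j yields an odd scalar in the
  separating ideal: subtract a lift of (a_i - 1)/2 to make it vanish at i.\<close>

lemma odd_sep_scalar_mod2:
  assumes spi: "full_span x y i" and spj: "full_span x y j"
    and a: "a \<in> tuple_alg_gen {x, y}" "red2_mat (a i) = red2_mat (mat 1)" "red2_mat (a j) = red2_mat 0"
  shows "\<exists>s. sep_scalars x y i j s \<and> odd s"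
proof -
  define u :: "int^2^2" where "u = (\<chi> p q. (a i $p$q - mat 1 $p$q) div 2)"
  have "even (a i $p$q - mat 1 $p$q)" for p q using a(2) by (simp add: red2_mat_eq_iff)
  then have ai: "a i = mat 1 + mat 2 ** u"
    by (simp add: mat2_eq_iff u_def scalar_mat_mult_entry)
  obtain d0 d1 d2 d3 where d: "u = comb d0 d1 d2 d3 (x i) (y i)"
    using spi unfolding full_span_def by blast
  let ?b = "\<lambda>l. a l - (mat 1 + mat 2 ** comb d0 d1 d2 d3 (x l) (y l))"
  have "?b \<in> tuple_alg_gen {x, y}"
    by (intro tuple_alg_gen_diff a(1) tuple_alg_gen.add tuple_alg_gen.one tuple_alg_gen.smult
        comb_in_tuple_alg_gen) auto
  moreover have "?b i = 0" using ai d by simp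
  ultimately have "sep_scalars x y i j (?b j $1$1)"
    by (intro sep_scalars_entry[OF spj] sep_ideal_intro)
  moreover have "even (a j $1$1)" using a(3) by (simp add: red2_mat_eq_iff)
  then have "odd (?b j $1$1)" by (simp add: scalar_mat_mult_entry mat2_entry)
  ultimately show ?thesis by blast
qed

lemma separating_element_mod2:
  assumes gen: "generates_M2_tuple k {red2 x, red2 y}" and ij: "i < k" "j < k" "i \<noteq> j"
    and zo: "zero_one (x i)" "zero_one (y i)" "zero_one (x j)" "zero_one (y j)"
    and units: "span_index (x i) (y i) \<in> {1, -1}" "span_index (x j) (y j) \<in> {1, -1}"
    and spi: "full_span x y i" and spj: "full_span x y j"
  shows "\<exists>e\<in>tuple_alg_gen {x, y}. e i = mat 1 \<and> e j = 0"
proof -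
  obtain a where a: "a \<in> tuple_alg_gen {x, y}"
    "\<forall>l<k. red2_mat (a l) = red2_mat (if l = i then mat 1 else 0)"
    using lift_mod2_target[OF gen, of "\<lambda>l. red2_mat (if l = i then mat 1 else 0)"] by blast
  then have ai: "red2_mat (a i) = red2_mat (mat 1)" and aj: "red2_mat (a j) = red2_mat 0"
    using ij by auto
  have "odd (span_index (x i) (y i))" using units(1) by auto
  then have differ: "invariants (x i) (y i) \<noteq> invariants (x j) (y j)"
    using equal_invariants_not_separated_mod2[OF _ _ a(1) ai] aj by blast
  obtain s where "sep_scalars x y i j s" "odd s" using odd_sep_scalar_mod2[OF spi spj a(1) ai aj] by blast
  then show ?thesis by (rule separating_element[OF spj zo units differ])
qed

theorem generation_lifts_from_mod2:
  assumes entries: "\<forall>i<k. \<forall>a b. x i $ a $ b \<in> {0, 1} \<and> y i $ a $ b \<in> {0, 1}"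
    and gen: "generates_M2_tuple k {red2 x, red2 y}"
  shows "generates_M2_tuple k {x, y}"
proof (rule generates_if_separated)
  have zo: "zero_one (x i)" "zero_one (y i)" if "i < k" for i
    using entries that by (simp_all add: zero_one_def)
  have units: "span_index (x i) (y i) \<in> {1, -1}" if "i < k" for i
    using span_index_unit_mod2[OF gen that zo[OF that]] .
  have sp: "full_span x y i" if "i < k" for i
    using span_index_unit_spans units[OF that] unfolding full_span_def by blast
  show "\<forall>i<k. \<forall>m. \<exists>a\<in>tuple_alg_gen {x, y}. a i = m" using full_span_element sp by blast
  show "\<forall>i<k. \<forall>j<k. i \<noteq> j \<longrightarrow> (\<exists>e\<in>tuple_alg_gen {x, y}. e i = mat 1 \<and> e j = 0)"
    using separating_element_mod2[OF gen _ _ _ zo zo units units sp sp] by blast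
qed

section \<open>A pair of generators of M_2(Z)^16\<close>

text \<open>Parity-separated invariants: some invariant difference among trace and determinant of
  x and y is odd, or the traces agree and the traces of xy differ by an odd number.  Then the
  scalar part of the separating ideal contains an odd number directly.\<close>

fun parity_separated :: "int \<times> int \<times> int \<times> int \<times> int \<Rightarrow> int \<times> int \<times> int \<times> int \<times> int \<Rightarrow> bool" where
  "parity_separated (p, q, r, s, t) (p', q', r', s', t') \<longleftrightarrow>
     odd (p' - p) \<or> odd (q' - q) \<or> odd (r' - r) \<or> odd (s' - s) \<or> (p' = p \<and> r' = r \<and> odd (t' - t))"

lemma parity_separated_differ: "parity_separated v v' \<Longrightarrow> v \<noteq> v'"
  by (cases v rule: prod_cases5; cases v' rule: prod_cases5) auto

lemma odd_sep_scalar_parity: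
  assumes sp: "full_span x y j" and zo: "zero_one (x j)" "zero_one (y j)"
    and non_scalar: "traceless_coords (x j) \<noteq> (0, 0, 0)" "traceless_coords (y j) \<noteq> (0, 0, 0)"
    and sep: "parity_separated (invariants (x i) (y i)) (invariants (x j) (y j))"
  shows "\<exists>s. sep_scalars x y i j s \<and> odd s"
  using sep_scalars_trace_det[OF sp zo(1) non_scalar(1), of i]
    sep_scalars_trace_det[OF full_span_swap[OF sp] zo(2) non_scalar(2), of i]
    sep_scalars_trace_mult[OF sp] sep
  unfolding sep_scalars_swap[where x = x and y = y] invariants_def parity_separated.simps
  by metis

definition example_x :: "(int \<times> int \<times> int \<times> int) list" where
  "example_x =
    [(0, 0, 0, 1), (0, 0, 0, 1), (0, 0, 0, 1), (0, 0, 0, 1),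
    (0, 0, 1, 0), (0, 0, 1, 0), (0, 0, 1, 0), (0, 0, 1, 0),
    (0, 1, 1, 0), (0, 1, 1, 0), (0, 1, 1, 0), (0, 1, 1, 0),
    (0, 1, 1, 1), (0, 1, 1, 1), (0, 1, 1, 1), (0, 1, 1, 1)]"

definition example_y :: "(int \<times> int \<times> int \<times> int) list" where
  "example_y =
    [(0, 1, 1, 0), (0, 1, 1, 1), (1, 1, 1, 0), (1, 1, 1, 1),
    (0, 1, 0, 0), (0, 1, 0, 1), (0, 1, 1, 0), (0, 1, 1, 1),
    (0, 0, 0, 1), (0, 0, 1, 0), (0, 1, 1, 1), (1, 0, 1, 1),
    (0, 0, 0, 1), (0, 0, 1, 0), (0, 0, 1, 1), (0, 1, 1, 0)]"

fun quad_mat :: "int \<times> int \<times> int \<times> int \<Rightarrow> int^2^2" where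
  "quad_mat (a, b, c, d) = mat2x2 a b c d"

fun quad_zero_one :: "int \<times> int \<times> int \<times> int \<Rightarrow> bool" where
  "quad_zero_one (a, b, c, d) \<longleftrightarrow> a \<in> {0, 1} \<and> b \<in> {0, 1} \<and> c \<in> {0, 1} \<and> d \<in> {0, 1}"

fun quad_invariants :: "int \<times> int \<times> int \<times> int \<Rightarrow> int \<times> int \<times> int \<times> int \<Rightarrow> int \<times> int \<times> int \<times> int \<times> int" where
  "quad_invariants (a, b, c, d) (e, f, g, h) =
     (a + d, a * d - b * c, e + h, e * h - f * g, a * e + b * g + c * f + d * h)"

lemma zero_one_quad_mat: "zero_one (quad_mat p) \<longleftrightarrow> quad_zero_one p"
  by (cases p rule: prod_cases4) (simp add: zero_one_iff)

lemma invariants_quad_mat: "invariants (quad_mat p) (quad_mat q) = quad_invariants p q"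
  by (cases p rule: prod_cases4; cases q rule: prod_cases4)
    (simp add: invariants_def trace_2 det_2 mat2_mult_entry)

lemma example_table:
  "\<forall>l\<in>set [0..<16]. quad_zero_one (example_x ! l) \<and> quad_zero_one (example_y ! l) \<and>
     index_form (quad_invariants (example_x ! l) (example_y ! l)) \<in> {1, -1}"
  by code_simp

lemma example_pairs:
  "\<forall>i\<in>set [0..<16]. \<forall>j\<in>set [0..<16]. i \<noteq> j \<longrightarrow>
     parity_separated (quad_invariants (example_x ! i) (example_y ! i))
       (quad_invariants (example_x ! j) (example_y ! j))"
  by code_simp

definition x16 :: "nat \<Rightarrow> int^2^2" where "x16 l = quad_mat (example_x ! l)"
definition y16 :: "nat \<Rightarrow> int^2^2" where "y16 l = quad_mat (example_y ! l)"

theorem sixteen_two_generated: "generates_M2_tuple 16 {x16, y16}"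
proof (rule generates_if_separated)
  have data: "zero_one (x16 l) \<and> zero_one (y16 l) \<and> span_index (x16 l) (y16 l) \<in> {1, -1}"
    if "l < 16" for l
    using example_table that
    by (simp add: x16_def y16_def zero_one_quad_mat span_index_invariants invariants_quad_mat)
  have sp: "full_span x16 y16 l" if "l < 16" for l
    using span_index_unit_spans data[OF that] unfolding full_span_def by blast
  show "\<forall>i<16. \<forall>m. \<exists>a\<in>tuple_alg_gen {x16, y16}. a i = m" using full_span_element sp by blast
  show "\<forall>i<16. \<forall>j<16. i \<noteq> j \<longrightarrow> (\<exists>e\<in>tuple_alg_gen {x16, y16}. e i = mat 1 \<and> e j = 0)"
  proof (intro allI impI)
    fix i j :: nat
    assume ij: "i < 16" "j < 16" "i \<noteq> j"
    then have sep: "parity_separated (invariants (x16 i) (y16 i)) (invariants (x16 j) (y16 j))"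
      using example_pairs by (simp add: x16_def y16_def invariants_quad_mat)
    have "traceless_coords (x16 j) \<noteq> (0, 0, 0)" "traceless_coords (y16 j) \<noteq> (0, 0, 0)"
      using span_index_non_scalar[of "x16 j" "y16 j"] data[OF ij(2)] by auto
    then obtain s where "sep_scalars x16 y16 i j s" "odd s"
      using odd_sep_scalar_parity[OF sp[OF ij(2)] _ _ _ _ sep] data[OF ij(2)] by blast
    then show "\<exists>e\<in>tuple_alg_gen {x16, y16}. e i = mat 1 \<and> e j = 0"
      using separating_element[OF sp[OF ij(2)]] data[OF ij(1)] data[OF ij(2)]
        parity_separated_differ[OF sep] by blast
  qed
qed

theorem mainTheorem19:
  shows "(\<forall>(k::nat) (x::nat \<Rightarrow> int^2^2) (y::nat \<Rightarrow> int^2^2).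
            k \<ge> 1 \<longrightarrow>
            (\<forall>i<k. \<forall>a b. x i $ a $ b \<in> {0, 1} \<and> y i $ a $ b \<in> {0, 1}) \<longrightarrow>
            generates_M2_tuple k {red2 x, red2 y} \<longrightarrow>
            generates_M2_tuple k {x, y})
       \<and> (\<exists>x y :: nat \<Rightarrow> int^2^2. generates_M2_tuple 16 {x, y})"
proof
  show "\<forall>(k::nat) (x::nat \<Rightarrow> int^2^2) (y::nat \<Rightarrow> int^2^2).
            k \<ge> 1 \<longrightarrow>
            (\<forall>i<k. \<forall>a b. x i $ a $ b \<in> {0, 1} \<and> y i $ a $ b \<in> {0, 1}) \<longrightarrow>
            generates_M2_tuple k {red2 x, red2 y} \<longrightarrow>
            generates_M2_tuple k {x, y}"
    using generation_lifts_from_mod2 by blast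
  show "\<exists>x y :: nat \<Rightarrow> int^2^2. generates_M2_tuple 16 {x, y}"
    using sixteen_two_generated by blast
qed

end
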